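(* Let $A=[a_{ij}]\in M_{m,n}(\mathbb{R})$ have rank $r\geq 1$ and be properly arranged. Then $A$ is diagonally eliminable up to $r$. Moreover, $|a^{(2k)}_{k+1,k+1}|\geq |a^{(2k)}_{ij}|$ for all $k$ with $0\leq k<r$ and all $i,j$ with $k+1\leq i\leq m$, $k+1\leq j\leq n$.
   Context: Gauss-Jordan procedure: for $A\in M_{m,n}(\mathbb{R})$ set $A^{(0)}=A$. For $k\geq 0$, if $A^{(2k)}=[a^{(2k)}_{ij}]$ is defined and $a^{(2k)}_{k+1,k+1}\neq 0$, let $\mathcal{G}_{2k+1}$ be the $m\times m$ diagonal matrix with all diagonal entries $1$ except the $(k+1,k+1)$ entry, which is $1/a^{(2k)}_{k+1,k+1}$, and set $A^{(2k+1)}=\mathcal{G}_{2k+1}A^{(2k)}=[a^{(2k+1)}_{ij}]$; then let $\mathcal{G}_{2k+2}=[g_{ij}]_{m\times m}$ with $g_{ii}=1$, $g_{i,k+1}=-a^{(2k+1)}_{i,k+1}$ for $i\neq k+1$, and all other entries $0$, and set $A^{(2k+2)}=\mathcal{G}_{2k+2}A^{(2k+1)}$. A matrix $A$ of rank $r\geq 1$ is diagonally eliminable up to $r$ if for each $k=1,\dots,r$ the matrix $A^{(2k-2)}$ is defined and $a^{(2k-2)}_{kk}\neq 0$. Minors: $m^{i_1\dots i_p}_{j_1\dots j_p}$ (increasing indices) is the determinant of the submatrix of $A$ with rows $i_1,\dots,i_p$ and columns $j_1,\dots,j_p$; $m_k=m^{1\dots k}_{1\dots k}$. $A$ (of rank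 $r\geq 1$) is properly arranged if $|a_{ij}|\leq|a_{11}|$ for all $1\leq i\leq m$, $1\leq j\leq n$, and for every integer $k$ with $1\leq k<\min\{m,n\}$ one has $|m^{1\dots k\,i}_{1\dots k\,j}|\leq|m_{k+1}|$ for all $k+1\leq i\leq m$, $k+1\leq j\leq n$. *)

theory Defs
  imports "Jordan_Normal_Form.DL_Rank_Submatrix"
begin

text \<open>Matrices are Jordan_Normal_Form matrices with 0-based indices: the paper's
  entry a_{ij} (1-based) is A $$ (i-1, j-1).\<close>

definition mrank :: "real mat \<Rightarrow> nat" where
  "mrank A = vec_space.rank (dim_row A) A"

definition gj_G_odd :: "nat \<Rightarrow> real mat \<Rightarrow> real mat" where
  "gj_G_odd k B = mat (dim_row B) (dim_row B)
     (\<lambda>(i,j). if i = j then (if i = k then 1 / B $$ (k,k) else 1) else 0)"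

definition gj_G_even :: "nat \<Rightarrow> real mat \<Rightarrow> real mat" where
  "gj_G_even k B = mat (dim_row B) (dim_row B)
     (\<lambda>(i,j). if i = j then 1 else if j = k then - B $$ (i,k) else 0)"

text \<open>gj A t = A^{(t)} (computed totally; it is the paper's A^{(t)} whenever that is
  defined, i.e. whenever all earlier pivots are nonzero).\<close>
fun gj :: "real mat \<Rightarrow> nat \<Rightarrow> real mat" where
  "gj A 0 = A"
| "gj A (Suc t) = (let B = gj A t; k = t div 2 in
      if even t then gj_G_odd k B * B else gj_G_even k B * B)"

text \<open>Diagonally eliminable up to r: for k = 1..r, a^{(2k-2)}_{kk} \<noteq> 0.
  (Definedness of A^{(2k-2)} follows from the conditions for smaller k.)\<close>
definition diag_eliminable :: "real mat \<Rightarrow> nat \<Rightarrow> bool" where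
  "diag_eliminable A r \<longleftrightarrow> (\<forall>k\<in>{1..r}. gj A (2*k - 2) $$ (k - 1, k - 1) \<noteq> 0)"

definition minor :: "real mat \<Rightarrow> nat set \<Rightarrow> nat set \<Rightarrow> real" where
  "minor A I J = det (submatrix A I J)"

definition lead_minor :: "real mat \<Rightarrow> nat \<Rightarrow> real" where
  "lead_minor A k = minor A {0..<k} {0..<k}"

definition properly_arranged :: "real mat \<Rightarrow> bool" where
  "properly_arranged A \<longleftrightarrow>
     (\<forall>i<dim_row A. \<forall>j<dim_col A. \<bar>A $$ (i,j)\<bar> \<le> \<bar>A $$ (0,0)\<bar>) \<and>
     (\<forall>k. 1 \<le> k \<and> k < min (dim_row A) (dim_col A) \<longrightarrow>
        (\<forall>i j. k \<le> i \<and> i < dim_row A \<and> k \<le> j \<and> j < dim_col A \<longrightarrow>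
           \<bar>minor A ({0..<k} \<union> {i}) ({0..<k} \<union> {j})\<bar> \<le> \<bar>lead_minor A (k+1)\<bar>))"

end

theory Submission
  imports Defs
begin

text \<open>After k elimination rounds with nonzero pivots, A^(2k) = E A, where E agrees with the
  identity outside its first k columns and the first k columns of A^(2k) are unit vectors.
  Restricting this factorisation to the rows {1..k, i} and the columns {1..k, j} gives
  a^(2k)_ij = m^{1..k i}_{1..k j} / m_k. Hence the pivot is m_{k+1} / m_k and, for a properly
  arranged matrix, it dominates the remaining block. A zero pivot would make that block vanish;
  then the rows of A below row k are combinations of its first k rows, forcing rank A \<le> k.\<close>

section \<open>Elimination rounds\<close>

lemma dim_gj_G_odd [simp]:
  "dim_row (gj_G_odd k B) = dim_row B" "dim_col (gj_G_odd k B) = dim_row B"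
  by (simp_all add: gj_G_odd_def)

lemma dim_gj_G_even [simp]:
  "dim_row (gj_G_even k B) = dim_row B" "dim_col (gj_G_even k B) = dim_row B"
  by (simp_all add: gj_G_even_def)

lemma gj_G_odd_mult_index:
  assumes "dim_row X = dim_row B" "i < dim_row B" "j < dim_col X"
  shows "(gj_G_odd k B * X) $$ (i,j) = (if i = k then X $$ (k,j) / B $$ (k,k) else X $$ (i,j))"
proof -
  let ?c = "if i = k then 1 / B $$ (k,k) else 1"
  have "(gj_G_odd k B * X) $$ (i,j) = (\<Sum>l<dim_row B. row (gj_G_odd k B) i $ l * col X j $ l)"
    using assms by (simp add: gj_G_odd_def scalar_prod_def lessThan_atLeast0)
  also have "\<dots> = (\<Sum>l<dim_row B. if l = i then ?c * X $$ (l,j) else 0)"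
    by (rule sum.cong) (use assms in \<open>auto simp: gj_G_odd_def\<close>)
  finally show ?thesis
    using assms by simp
qed

lemma gj_G_even_mult_index:
  assumes "dim_row X = dim_row B" "i < dim_row B" "j < dim_col X" "k < dim_row B"
  shows "(gj_G_even k B * X) $$ (i,j) =
    (if i = k then X $$ (k,j) else X $$ (i,j) - B $$ (i,k) * X $$ (k,j))"
proof -
  have "(gj_G_even k B * X) $$ (i,j) = (\<Sum>l<dim_row B. row (gj_G_even k B) i $ l * col X j $ l)"
    using assms by (simp add: gj_G_even_def scalar_prod_def lessThan_atLeast0)
  also have "\<dots> = (\<Sum>l<dim_row B. if l = i then X $$ (l,j) else 0) +
     (\<Sum>l<dim_row B. if l = k then (if i = k then 0 else - B $$ (i,k) * X $$ (l,j)) else 0)"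
    unfolding sum.distrib[symmetric]
    by (rule sum.cong) (use assms in \<open>auto simp: gj_G_even_def\<close>)
  finally show ?thesis
    using assms by simp
qed

definition gj_round :: "nat \<Rightarrow> real mat \<Rightarrow> real mat" where
  "gj_round k B = gj_G_even k (gj_G_odd k B * B) * gj_G_odd k B"

lemma gj_round_carrier_mat [simp]: "gj_round k B \<in> carrier_mat (dim_row B) (dim_row B)"
  by (rule carrier_matI) (simp_all add: gj_round_def)

lemma gj_round_mult_assoc:
  assumes "dim_row X = dim_row B"
  shows "gj_round k B * X = gj_G_even k (gj_G_odd k B * B) * (gj_G_odd k B * X)"
proof -
  have "gj_G_even k (gj_G_odd k B * B) \<in> carrier_mat (dim_row B) (dim_row B)"
    "gj_G_odd k B \<in> carrier_mat (dim_row B) (dim_row B)" "X \<in> carrier_mat (dim_row B) (dim_col X)"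
    using assms by (intro carrier_matI; simp)+
  then show ?thesis
    unfolding gj_round_def by (rule assoc_mult_mat)
qed

lemma gj_round_mult_index:
  assumes X: "dim_row X = dim_row B" and i: "i < dim_row B" and j: "j < dim_col X"
    and k: "k < dim_row B" "k < dim_col B"
  shows "(gj_round k B * X) $$ (i,j) =
    (if i = k then X $$ (k,j) / B $$ (k,k) else X $$ (i,j) - B $$ (i,k) * (X $$ (k,j) / B $$ (k,k)))"
proof -
  let ?Go = "gj_G_odd k B"
  have Go_X: "(?Go * X) $$ (l,j) = (if l = k then X $$ (k,j) / B $$ (k,k) else X $$ (l,j))"
    if "l < dim_row B" for l
    by (rule gj_G_odd_mult_index) (use X j that in auto)
  have Go_B: "(?Go * B) $$ (i,k) = B $$ (i,k)" if "i \<noteq> k"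
    using gj_G_odd_mult_index[of B B i k k] i k that by simp
  have "(gj_round k B * X) $$ (i,j) =
    (if i = k then (?Go * X) $$ (k,j) else (?Go * X) $$ (i,j) - (?Go * B) $$ (i,k) * (?Go * X) $$ (k,j))"
    unfolding gj_round_mult_assoc[OF X] by (rule gj_G_even_mult_index) (use X i j k in auto)
  then show ?thesis
    using Go_X[OF i] Go_X[OF k(1)] Go_B by auto
qed

lemma gj_round_mult_index_unchanged:
  assumes "dim_row X = dim_row B" "i < dim_row B" "j < dim_col X" "k < dim_row B" "k < dim_col B"
    and "X $$ (k,j) = 0"
  shows "(gj_round k B * X) $$ (i,j) = X $$ (i,j)"
  using gj_round_mult_index[OF assms(1-5)] assms(6) by simp

lemma gj_round_mult_pivot_col:
  assumes "i < dim_row B" "k < dim_row B" "k < dim_col B" and "B $$ (k,k) \<noteq> 0"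
  shows "(gj_round k B * B) $$ (i,k) = (if i = k then 1 else 0)"
  using gj_round_mult_index[of B B i k k] assms by simp

lemma dim_gj [simp]: "dim_row (gj A t) = dim_row A" "dim_col (gj A t) = dim_col A"
  by (induction t) (simp_all add: Let_def)

lemma gj_carrier_mat: "A \<in> carrier_mat m n \<Longrightarrow> gj A t \<in> carrier_mat m n"
  by (metis carrier_matD carrier_matI dim_gj)

lemma gj_double_Suc: "gj A (2 * Suc k) = gj_round k (gj A (2*k)) * gj A (2*k)"
proof -
  let ?B = "gj A (2*k)"
  have odd_step: "gj A (Suc (2*k)) = gj_G_odd k ?B * ?B"
    by (simp add: Let_def)
  have "2 * Suc k = Suc (Suc (2*k))"
    by simp
  then have "gj A (2 * Suc k) = gj_G_even k (gj A (Suc (2*k))) * gj A (Suc (2*k))"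
    by (simp only: gj.simps(2)[of A "Suc (2*k)"] Let_def) simp
  also have "\<dots> = gj_round k ?B * ?B"
    unfolding odd_step by (rule gj_round_mult_assoc[symmetric]) simp
  finally show ?thesis .
qed

lemma gj_double_Suc_factor:
  assumes E: "E \<in> carrier_mat m m" and A: "A \<in> carrier_mat m n" and factor: "gj A (2*k) = E * A"
  shows "gj A (2 * Suc k) = (gj_round k (gj A (2*k)) * E) * A"
proof -
  have "gj_round k (gj A (2*k)) \<in> carrier_mat m m"
    using gj_round_carrier_mat[of k "gj A (2*k)"] carrier_matD[OF A] by simp
  moreover have "gj A (2 * Suc k) = gj_round k (gj A (2*k)) * (E * A)"
    unfolding gj_double_Suc by (rule arg_cong[OF factor])
  ultimately show ?thesis
    using E A by simp
qed

definition gj_stage_factor :: "real mat \<Rightarrow> nat \<Rightarrow> nat \<Rightarrow> real mat \<Rightarrow> bool" where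
  "gj_stage_factor A m k E \<longleftrightarrow> E \<in> carrier_mat m m \<and> gj A (2*k) = E * A \<and>
     (\<forall>i<m. \<forall>l<m. k \<le> l \<longrightarrow> E $$ (i,l) = (if i = l then 1 else 0)) \<and>
     (\<forall>i<m. \<forall>j<k. gj A (2*k) $$ (i,j) = (if i = j then 1 else 0))"

lemma gj_stage_factor_0: "A \<in> carrier_mat m n \<Longrightarrow> gj_stage_factor A m 0 (1\<^sub>m m)"
  unfolding gj_stage_factor_def by simp

lemma gj_stage_factor_Suc:
  assumes A: "A \<in> carrier_mat m n" and k: "k < m" "k < n"
    and stage: "gj_stage_factor A m k E" and pivot: "gj A (2*k) $$ (k,k) \<noteq> 0"
  shows "gj_stage_factor A m (Suc k) (gj_round k (gj A (2*k)) * E)"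
proof -
  let ?B = "gj A (2*k)" and ?R = "gj_round k (gj A (2*k))"
  define B' where "B' = gj A (2 * Suc k)"
  have B: "?B \<in> carrier_mat m n"
    using gj_carrier_mat[OF A] .
  have E: "E \<in> carrier_mat m m" and BE: "?B = E * A"
    and E_unit: "\<And>i l. i < m \<Longrightarrow> l < m \<Longrightarrow> k \<le> l \<Longrightarrow> E $$ (i,l) = (if i = l then 1 else 0)"
    and B_unit: "\<And>i j. i < m \<Longrightarrow> j < k \<Longrightarrow> ?B $$ (i,j) = (if i = j then 1 else 0)"
    using stage unfolding gj_stage_factor_def by auto
  have R: "?R \<in> carrier_mat m m"
    using gj_round_carrier_mat[of k ?B] carrier_matD[OF A] by simp
  have factor: "B' = (?R * E) * A"
    unfolding B'_def using gj_double_Suc_factor[OF E A BE] .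
  have E'_unit: "(?R * E) $$ (i,l) = (if i = l then 1 else 0)" if "i < m" "l < m" "Suc k \<le> l" for i l
  proof -
    have "(?R * E) $$ (i,l) = E $$ (i,l)"
      by (rule gj_round_mult_index_unchanged) (use B E E_unit[of k l] k that in auto)
    then show ?thesis
      using E_unit that by simp
  qed
  have B'_unit: "B' $$ (i,j) = (if i = j then 1 else 0)" if "i < m" "j < Suc k" for i j
  proof (cases "j < k")
    case True
    have "B' $$ (i,j) = ?B $$ (i,j)"
      unfolding B'_def gj_double_Suc
      by (rule gj_round_mult_index_unchanged) (use B B_unit[OF k(1) True] True k that in auto)
    then show ?thesis
      using B_unit[OF that(1) True] by simp
  next
    case False
    then have "j = k"
      using that by simp
    then show ?thesis
      unfolding B'_def gj_double_Suc
      using gj_round_mult_pivot_col[of i ?B k] carrier_matD[OF A] pivot k that by simp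
  qed
  show ?thesis
    unfolding gj_stage_factor_def B'_def[symmetric]
    using mult_carrier_mat[OF R E] factor E'_unit B'_unit by blast
qed

lemma gj_stage_factor_exists:
  assumes A: "A \<in> carrier_mat m n"
  shows "k \<le> m \<Longrightarrow> k \<le> n \<Longrightarrow> \<forall>t<k. gj A (2*t) $$ (t,t) \<noteq> 0 \<Longrightarrow> \<exists>E. gj_stage_factor A m k E"
proof (induction k)
  case 0
  then show ?case
    using gj_stage_factor_0[OF A] by blast
next
  case (Suc k)
  then obtain E where E: "gj_stage_factor A m k E"
    by auto
  have "k < m" "k < n" "gj A (2*k) $$ (k,k) \<noteq> 0"
    using Suc.prems by auto
  then show ?case
    using gj_stage_factor_Suc[OF A _ _ E] by blast
qed

section \<open>Bordered submatrices\<close>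

lemma pick_initial_segment: "l < k \<Longrightarrow> pick ({0..<k} \<union> X) l = l"
proof (induction l)
  case 0
  then show ?case
    by (simp add: Least_eq_0)
next
  case (Suc l)
  then have "pick ({0..<k} \<union> X) l = l"
    by simp
  then show ?case
    using Suc.prems by (auto intro!: Least_equality)
qed

definition border :: "nat \<Rightarrow> nat \<Rightarrow> nat \<Rightarrow> nat" where
  "border k i a = (if a < k then a else i)"

lemma bij_betw_border: "k \<le> i \<Longrightarrow> bij_betw (border k i) {..<Suc k} ({..<k} \<union> {i})"
  unfolding bij_betw_def inj_on_def border_def by (auto simp: image_iff)

lemma pick_border:
  assumes "k \<le> i" "a \<le> k"
  shows "pick (insert i {0..<k}) a = border k i a"
proof (cases "a < k")
  case True
  then show ?thesis
    using pick_initial_segment[of a k "{i}"] by (simp add: border_def)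
next
  case False
  then have a: "a = k"
    using assms by simp
  show ?thesis
  proof (cases k)
    case 0
    then show ?thesis
      using a by (auto simp: border_def intro: Least_equality)
  next
    case (Suc k')
    then have "pick (insert i {0..<k}) k' = k'"
      using pick_initial_segment[of k' k "{i}"] by simp
    then show ?thesis
      using Suc a assms by (auto simp: border_def intro!: Least_equality)
  qed
qed

lemma submatrix_border:
  assumes "k \<le> i" "i < dim_row A" "k \<le> j" "j < dim_col A"
  shows "submatrix A ({0..<k} \<union> {i}) ({0..<k} \<union> {j}) =
    mat (Suc k) (Suc k) (\<lambda>(a,b). A $$ (border k i a, border k j b))"
proof -
  have "{x. x < dim_row A \<and> x \<in> {0..<k} \<union> {i}} = insert i {0..<k}"
    "{x. x < dim_col A \<and> x \<in> {0..<k} \<union> {j}} = insert j {0..<k}"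
    using assms by auto
  then show ?thesis
    unfolding submatrix_def using assms by (intro eq_matI) (auto simp: pick_border)
qed

lemma submatrix_leading:
  assumes "k \<le> dim_row A" "k \<le> dim_col A"
  shows "submatrix A {0..<k} {0..<k} = mat k k (\<lambda>(a,b). A $$ (a,b))"
proof -
  have "{x. x < dim_row A \<and> x \<in> {0..<k}} = {0..<k}" "{x. x < dim_col A \<and> x \<in> {0..<k}} = {0..<k}"
    using assms by auto
  moreover have "pick {0..<k} a = a" if "a < k" for a
    using pick_initial_segment[of a k "{}"] that by simp
  ultimately show ?thesis
    unfolding submatrix_def by (intro eq_matI) auto
qed

lemma minor_singleton:
  assumes "i < dim_row A" "j < dim_col A"
  shows "minor A {i} {j} = A $$ (i,j)"
  using submatrix_border[of 0 i A j] assms by (simp add: minor_def det_single border_def)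

lemma reindex_mult_unit_cols:
  fixes E A :: "'a :: semiring_1 mat"
  assumes E: "E \<in> carrier_mat m m" and A: "A \<in> carrier_mat m n"
    and E_unit: "\<And>i l. i < m \<Longrightarrow> l < m \<Longrightarrow> k \<le> l \<Longrightarrow> E $$ (i,l) = (if i = l then 1 else 0)"
    and \<sigma>: "bij_betw \<sigma> {..<s} S" and S: "{..<k} \<subseteq> S" "S \<subseteq> {..<m}"
    and \<tau>: "\<And>b. b < s' \<Longrightarrow> \<tau> b < n"
  shows "mat s s' (\<lambda>(a,b). (E * A) $$ (\<sigma> a, \<tau> b)) =
    mat s s (\<lambda>(a,c). E $$ (\<sigma> a, \<sigma> c)) * mat s s' (\<lambda>(c,b). A $$ (\<sigma> c, \<tau> b))"
proof (rule eq_matI)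
  fix a b
  assume "a < dim_row (mat s s (\<lambda>(a,c). E $$ (\<sigma> a, \<sigma> c)) * mat s s' (\<lambda>(c,b). A $$ (\<sigma> c, \<tau> b)))"
    and "b < dim_col (mat s s (\<lambda>(a,c). E $$ (\<sigma> a, \<sigma> c)) * mat s s' (\<lambda>(c,b). A $$ (\<sigma> c, \<tau> b)))"
  then have a: "a < s" and b: "b < s'"
    by auto
  have \<sigma>a: "\<sigma> a \<in> S" "\<sigma> a < m"
    using \<sigma> a S unfolding bij_betw_def by auto
  have "(E * A) $$ (\<sigma> a, \<tau> b) = (\<Sum>l\<in>{0..<m}. E $$ (\<sigma> a, l) * A $$ (l, \<tau> b))"
    using E A \<sigma>a \<tau>[OF b] by (simp add: scalar_prod_def)
  also have "\<dots> = (\<Sum>l\<in>S. E $$ (\<sigma> a, l) * A $$ (l, \<tau> b))"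
  proof (rule sum.mono_neutral_right)
    show "\<forall>l\<in>{0..<m} - S. E $$ (\<sigma> a, l) * A $$ (l, \<tau> b) = 0"
    proof
      fix l
      assume "l \<in> {0..<m} - S"
      then have "l < m" "k \<le> l" "l \<noteq> \<sigma> a"
        using S \<sigma>a(1) by (auto simp: not_less[symmetric])
      then show "E $$ (\<sigma> a, l) * A $$ (l, \<tau> b) = 0"
        using E_unit[OF \<sigma>a(2)] by simp
    qed
  qed (use S in auto)
  also have "\<dots> = (\<Sum>c<s. E $$ (\<sigma> a, \<sigma> c) * A $$ (\<sigma> c, \<tau> b))"
    using sum.reindex_bij_betw[OF \<sigma>, of "\<lambda>l. E $$ (\<sigma> a, l) * A $$ (l, \<tau> b)"] by simp
  finally show "mat s s' (\<lambda>(a,b). (E * A) $$ (\<sigma> a, \<tau> b)) $$ (a,b) =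
    (mat s s (\<lambda>(a,c). E $$ (\<sigma> a, \<sigma> c)) * mat s s' (\<lambda>(c,b). A $$ (\<sigma> c, \<tau> b))) $$ (a,b)"
    using a b by (simp add: scalar_prod_def lessThan_atLeast0)
qed auto

lemma det_expand_last_col:
  fixes Q :: "'a :: comm_ring_1 mat"
  assumes Q: "Q \<in> carrier_mat (Suc k) (Suc k)" and zero: "\<And>a. a < k \<Longrightarrow> Q $$ (a,k) = 0"
  shows "det Q = Q $$ (k,k) * det (mat k k (\<lambda>(a,b). Q $$ (a,b)))"
proof -
  have "mat_delete Q k k = mat k k (\<lambda>(a,b). Q $$ (a,b))"
    using Q by (intro eq_matI) (auto simp: mat_delete_def)
  moreover have "det Q = (\<Sum>i<Suc k. Q $$ (i,k) * cofactor Q i k)"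
    by (rule laplace_expansion_column[OF Q]) simp
  ultimately show ?thesis
    by (simp add: zero cofactor_def)
qed

lemma det_expand_last_row:
  fixes Q :: "'a :: comm_ring_1 mat"
  assumes Q: "Q \<in> carrier_mat (Suc k) (Suc k)" and zero: "\<And>b. b < k \<Longrightarrow> Q $$ (k,b) = 0"
  shows "det Q = Q $$ (k,k) * det (mat k k (\<lambda>(a,b). Q $$ (a,b)))"
proof -
  have "mat_delete Q k k = mat k k (\<lambda>(a,b). Q $$ (a,b))"
    using Q by (intro eq_matI) (auto simp: mat_delete_def)
  moreover have "det Q = (\<Sum>j<Suc k. Q $$ (k,j) * cofactor Q k j)"
    by (rule laplace_expansion_row[OF Q]) simp
  ultimately show ?thesis
    by (simp add: zero cofactor_def)
qed

section \<open>Eliminated entries as quotients of minors\<close>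

lemma gj_stage_factor_lead_det:
  assumes A: "A \<in> carrier_mat m n" and stage: "gj_stage_factor A m k E" and k: "k \<le> m" "k \<le> n"
  shows "det (mat k k (\<lambda>(a,b). E $$ (a,b))) * lead_minor A k = 1"
proof -
  have E: "E \<in> carrier_mat m m" and BE: "gj A (2*k) = E * A"
    and E_unit: "\<And>i l. i < m \<Longrightarrow> l < m \<Longrightarrow> k \<le> l \<Longrightarrow> E $$ (i,l) = (if i = l then 1 else 0)"
    and B_unit: "\<And>i j. i < m \<Longrightarrow> j < k \<Longrightarrow> gj A (2*k) $$ (i,j) = (if i = j then 1 else 0)"
    using stage unfolding gj_stage_factor_def by auto
  have "1\<^sub>m k = mat k k (\<lambda>(a,b). (E * A) $$ (a,b))"
    unfolding BE[symmetric] by (rule eq_matI) (use B_unit k in auto)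
  also have "\<dots> = mat k k (\<lambda>(a,b). E $$ (a,b)) * submatrix A {0..<k} {0..<k}"
    using reindex_mult_unit_cols[OF E A E_unit, where \<sigma>=id and s=k and S="{..<k}" and s'=k and \<tau>=id]
      submatrix_leading[of k A] A k
    by auto
  finally have "det (1\<^sub>m k :: real mat) = det (mat k k (\<lambda>(a,b). E $$ (a,b))) * lead_minor A k"
    unfolding lead_minor_def minor_def using A k
    by (metis det_mult mat_carrier submatrix_leading carrier_matD)
  then show ?thesis
    by simp
qed

lemma gj_stage_factor_entry:
  assumes A: "A \<in> carrier_mat m n" and stage: "gj_stage_factor A m k E"
    and i: "k \<le> i" "i < m" and j: "k \<le> j" "j < n"
  shows "gj A (2*k) $$ (i,j) =
    det (mat k k (\<lambda>(a,b). E $$ (a,b))) * minor A ({0..<k} \<union> {i}) ({0..<k} \<union> {j})"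
proof -
  define B where "B = gj A (2*k)"
  have E: "E \<in> carrier_mat m m" and BE: "B = E * A"
    and E_unit: "\<And>i l. i < m \<Longrightarrow> l < m \<Longrightarrow> k \<le> l \<Longrightarrow> E $$ (i,l) = (if i = l then 1 else 0)"
    and B_unit: "\<And>i j. i < m \<Longrightarrow> j < k \<Longrightarrow> B $$ (i,j) = (if i = j then 1 else 0)"
    using stage unfolding gj_stage_factor_def B_def by auto
  let ?P = "mat (Suc k) (Suc k) (\<lambda>(a,c). E $$ (border k i a, border k i c))"
  let ?Q = "mat (Suc k) (Suc k) (\<lambda>(a,b). B $$ (border k i a, border k j b))"
  let ?R = "mat (Suc k) (Suc k) (\<lambda>(c,b). A $$ (border k i c, border k j b))"
  have "?Q = ?P * ?R"
    unfolding BE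
    by (rule reindex_mult_unit_cols[OF E A E_unit bij_betw_border[OF i(1)]])
       (use i j in \<open>auto simp: border_def\<close>)
  moreover have "det ?P = det (mat k k (\<lambda>(a,b). E $$ (a,b)))"
  proof -
    have "det ?P = ?P $$ (k,k) * det (mat k k (\<lambda>(a,b). ?P $$ (a,b)))"
      by (rule det_expand_last_col) (use E_unit i in \<open>auto simp: border_def\<close>)
    also have "mat k k (\<lambda>(a,b). ?P $$ (a,b)) = mat k k (\<lambda>(a,b). E $$ (a,b))"
      by (rule eq_matI) (auto simp: border_def)
    finally show ?thesis
      using E_unit[of i i] i by (simp add: border_def)
  qed
  moreover have "det ?Q = B $$ (i,j)"
  proof -
    have "det ?Q = ?Q $$ (k,k) * det (mat k k (\<lambda>(a,b). ?Q $$ (a,b)))"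
      by (rule det_expand_last_row) (use B_unit i in \<open>auto simp: border_def\<close>)
    also have "mat k k (\<lambda>(a,b). ?Q $$ (a,b)) = 1\<^sub>m k"
      by (rule eq_matI) (use B_unit i in \<open>auto simp: border_def\<close>)
    finally show ?thesis
      by (simp add: border_def)
  qed
  moreover have "submatrix A ({0..<k} \<union> {i}) ({0..<k} \<union> {j}) = ?R"
    using submatrix_border[of k i A j] i j A by simp
  ultimately show ?thesis
    unfolding B_def[symmetric] minor_def using det_mult[of ?P "Suc k" ?R] by simp
qed

lemma gj_entry_eq_bordered_minor_div:
  assumes A: "A \<in> carrier_mat m n" and pivots: "\<forall>t<k. gj A (2*t) $$ (t,t) \<noteq> 0"
    and i: "k \<le> i" "i < m" and j: "k \<le> j" "j < n"
  shows "gj A (2*k) $$ (i,j) = minor A ({0..<k} \<union> {i}) ({0..<k} \<union> {j}) / lead_minor A k"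
proof -
  obtain E where stage: "gj_stage_factor A m k E"
    using gj_stage_factor_exists[OF A] pivots i j by fastforce
  have inverse: "det (mat k k (\<lambda>(a,b). E $$ (a,b))) * lead_minor A k = 1"
    using gj_stage_factor_lead_det[OF A stage] i j by simp
  then have "lead_minor A k \<noteq> 0"
    by auto
  with inverse have "det (mat k k (\<lambda>(a,b). E $$ (a,b))) = 1 / lead_minor A k"
    by (simp add: field_simps)
  then show ?thesis
    using gj_stage_factor_entry[OF A stage i j] by simp
qed

section \<open>Nonvanishing pivots\<close>

lemma rank_le_outer_sum:
  fixes A :: "'a :: field mat" and f g :: "nat \<Rightarrow> nat \<Rightarrow> 'a"
  assumes "A \<in> carrier_mat m n" and "\<And>r c. r < m \<Longrightarrow> c < n \<Longrightarrow> A $$ (r,c) = (\<Sum>l<p. f l r * g l c)"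
  shows "vec_space.rank m A \<le> p"
  using assms
proof (induction p arbitrary: A)
  case 0
  then have "A = 0\<^sub>m m n"
    by (intro eq_matI) auto
  then show ?case
    using vec_space.rank_0I by simp
next
  case (Suc p)
  define A1 where "A1 = mat m n (\<lambda>(r,c). \<Sum>l<p. f l r * g l c)"
  define A2 where "A2 = mat m n (\<lambda>(r,c). f p r * g p c)"
  have A1: "A1 \<in> carrier_mat m n" and A2: "A2 \<in> carrier_mat m n"
    unfolding A1_def A2_def by auto
  have "A = A1 + A2"
    using Suc.prems unfolding A1_def A2_def by (intro eq_matI) auto
  moreover have "vec_space.rank m A1 \<le> p"
    by (rule Suc.IH[OF A1]) (simp add: A1_def)
  moreover have "vec_space.rank m A2 \<le> 1"
    by (rule vec_space.rank_le_1_product_entries[OF A2]) (use A2 in \<open>auto simp: A2_def\<close>)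
  ultimately show ?case
    using vec_space.rank_subadditive[OF A1 A2] by simp
qed

lemma mrank_le_dim_row: "A \<in> carrier_mat m n \<Longrightarrow> mrank A \<le> m"
  unfolding mrank_def
  by (rule rank_le_outer_sum[where f="\<lambda>l r. of_bool (l = r)" and g="\<lambda>l c. A $$ (l,c)"]) auto

lemma mrank_le_dim_col: "A \<in> carrier_mat m n \<Longrightarrow> mrank A \<le> n"
  unfolding mrank_def using vec_space.rank_le_nc by auto

lemma gj_stage_factor_mrank_le:
  assumes A: "A \<in> carrier_mat m n" and stage: "gj_stage_factor A m k E" and k: "k \<le> m"
    and zero: "\<And>i j. k \<le> i \<Longrightarrow> i < m \<Longrightarrow> j < n \<Longrightarrow> gj A (2*k) $$ (i,j) = 0"
  shows "mrank A \<le> k"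
proof -
  have E: "E \<in> carrier_mat m m" and BE: "gj A (2*k) = E * A"
    and E_unit: "\<And>i l. i < m \<Longrightarrow> l < m \<Longrightarrow> k \<le> l \<Longrightarrow> E $$ (i,l) = (if i = l then 1 else 0)"
    using stage unfolding gj_stage_factor_def by auto
  have "vec_space.rank m A \<le> k"
    \<comment> \<open>a row r \<ge> k of E A is row r of A plus a combination of the first k rows of A\<close>
  proof (rule rank_le_outer_sum[OF A])
    fix r c
    assume r: "r < m" and c: "c < n"
    show "A $$ (r,c) = (\<Sum>l<k. (if r < k then of_bool (l = r) else - E $$ (r,l)) * A $$ (l,c))"
    proof (cases "r < k")
      case True
      then show ?thesis
        by simp
    next
      case False
      have "0 = (E * A) $$ (r,c)"
        using zero[of r c] False r c BE by simp
      also have "\<dots> = (\<Sum>l\<in>{0..<m}. E $$ (r,l) * A $$ (l,c))"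
        using E A r c by (simp add: scalar_prod_def)
      also have "\<dots> = (\<Sum>l\<in>{0..<k}. E $$ (r,l) * A $$ (l,c)) + (\<Sum>l\<in>{k..<m}. E $$ (r,l) * A $$ (l,c))"
        using k by (simp add: sum.atLeastLessThan_concat)
      also have "(\<Sum>l\<in>{k..<m}. E $$ (r,l) * A $$ (l,c)) = (\<Sum>l\<in>{k..<m}. if l = r then A $$ (l,c) else 0)"
        by (rule sum.cong) (use E_unit r in auto)
      also have "\<dots> = A $$ (r,c)"
        using False r by simp
      finally show ?thesis
        using False by (simp add: lessThan_atLeast0 sum_negf eq_neg_iff_add_eq_0 add.commute)
    qed
  qed
  then show ?thesis
    unfolding mrank_def using carrier_matD(1)[OF A] by simp
qed

lemma properly_arranged_bordered_minor_le:
  assumes PA: "properly_arranged A" and A: "A \<in> carrier_mat m n"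
    and k: "k < m" "k < n" and i: "k \<le> i" "i < m" and j: "k \<le> j" "j < n"
  shows "\<bar>minor A ({0..<k} \<union> {i}) ({0..<k} \<union> {j})\<bar> \<le> \<bar>lead_minor A (Suc k)\<bar>"
proof (cases "k = 0")
  case True
  then show ?thesis
    using PA A i j minor_singleton[of i A j] minor_singleton[of 0 A 0] k
    unfolding properly_arranged_def lead_minor_def by auto
next
  case False
  then show ?thesis
    using PA A k i j unfolding properly_arranged_def by auto
qed

lemma gj_entry_abs_le_pivot:
  assumes PA: "properly_arranged A" and A: "A \<in> carrier_mat m n"
    and pivots: "\<forall>t<k. gj A (2*t) $$ (t,t) \<noteq> 0" and k: "k < m" "k < n"
    and i: "k \<le> i" "i < m" and j: "k \<le> j" "j < n"
  shows "\<bar>gj A (2*k) $$ (i,j)\<bar> \<le> \<bar>gj A (2*k) $$ (k,k)\<bar>"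
proof -
  have "{0..<k} \<union> {k} = {0..<Suc k}"
    by auto
  then have pivot: "gj A (2*k) $$ (k,k) = lead_minor A (Suc k) / lead_minor A k"
    using gj_entry_eq_bordered_minor_div[OF A pivots order.refl k(1) order.refl k(2)]
    by (simp only: lead_minor_def)
  show ?thesis
    unfolding pivot gj_entry_eq_bordered_minor_div[OF A pivots i j] abs_divide
    by (rule divide_right_mono) (use properly_arranged_bordered_minor_le[OF PA A k i j] in auto)
qed

lemma gj_pivots_nonzero:
  assumes A: "A \<in> carrier_mat m n" and PA: "properly_arranged A"
  shows "k \<le> mrank A \<Longrightarrow> \<forall>t<k. gj A (2*t) $$ (t,t) \<noteq> 0"
proof (induction k)
  case 0
  then show ?case
    by simp
next
  case (Suc k)
  then have pivots: "\<forall>t<k. gj A (2*t) $$ (t,t) \<noteq> 0" and rank: "k < mrank A"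
    by auto
  have k: "k < m" "k < n"
    using rank mrank_le_dim_row[OF A] mrank_le_dim_col[OF A] by auto
  have "gj A (2*k) $$ (k,k) \<noteq> 0"
  proof
    assume zero_pivot: "gj A (2*k) $$ (k,k) = 0"
    obtain E where stage: "gj_stage_factor A m k E"
      using gj_stage_factor_exists[OF A] pivots k by fastforce
    have "gj A (2*k) $$ (i,j) = 0" if "k \<le> i" "i < m" "j < n" for i j
    proof (cases "j < k")
      case True
      then show ?thesis
        using stage that unfolding gj_stage_factor_def by auto
    next
      case False
      then show ?thesis
        using gj_entry_abs_le_pivot[OF PA A pivots k, of i j] that zero_pivot by simp
    qed
    then have "mrank A \<le> k"
      using gj_stage_factor_mrank_le[OF A stage] k by simp
    with rank show False
      by simp
  qed
  then show ?case
    using pivots less_Suc_eq by auto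
qed

theorem theorem2p11:
  fixes A :: "real mat" and m n r :: nat
  assumes "A \<in> carrier_mat m n"
    and "mrank A = r" and "r \<ge> 1"
    and "properly_arranged A"
  shows "diag_eliminable A r \<and>
    (\<forall>k<r. \<forall>i j. k \<le> i \<and> i < m \<and> k \<le> j \<and> j < n \<longrightarrow>
        \<bar>gj A (2*k) $$ (k,k)\<bar> \<ge> \<bar>gj A (2*k) $$ (i,j)\<bar>)"
proof -
  have r: "r \<le> m" "r \<le> n"
    using mrank_le_dim_row[OF assms(1)] mrank_le_dim_col[OF assms(1)] assms(2) by auto
  have pivots: "\<forall>t<r. gj A (2*t) $$ (t,t) \<noteq> 0"
    using gj_pivots_nonzero[OF assms(1,4), of r] assms(2) by simp
  have "diag_eliminable A r"
    unfolding diag_eliminable_def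
  proof
    fix k
    assume "k \<in> {1..r}"
    then have "2*k - 2 = 2*(k - 1)" "k - 1 < r"
      by auto
    then show "gj A (2*k - 2) $$ (k - 1, k - 1) \<noteq> 0"
      using pivots by simp
  qed
  moreover have "\<bar>gj A (2*k) $$ (i,j)\<bar> \<le> \<bar>gj A (2*k) $$ (k,k)\<bar>"
    if "k < r" "k \<le> i" "i < m" "k \<le> j" "j < n" for k i j
    using gj_entry_abs_le_pivot[OF assms(4,1)] pivots r that by simp
  ultimately show ?thesis
    by blast
qed

end
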